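(* For every $k\ge 1$, the commutator subgroup of $G_k$ consists exactly of commutators: $$G_k'=\{[f_1,f_2]: f_1,f_2\in G_k\}.$$
   Context: $G_k$ is the subgroup of the automorphism group $B_k\cong\wr_{i=1}^kC_2$ of the binary rooted tree of depth $k$ consisting of automorphisms acting by even permutations on the $2^k$ leaves; $G_k\cong\mathrm{Syl}_2(A_{2^k})$. $[a,b]=aba^{-1}b^{-1}$. *)

theory Defs
  imports "HOL-Algebra.Algebra" "HOL-Combinatorics.Combinatorics"
begin

text \<open>Vertices of the binary rooted tree of depth k: binary words of length at most k
  (the root is the empty word, the children of xs are xs@[False] and xs@[True]);
  the leaves are the words of length exactly k.\<close>

definition tree_vertices :: "nat \<Rightarrow> bool list set" where
  "tree_vertices k = {xs. length xs \<le> k}"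

definition tree_aut :: "nat \<Rightarrow> (bool list \<Rightarrow> bool list) \<Rightarrow> bool" where
  "tree_aut k f \<longleftrightarrow>
     bij_betw f (tree_vertices k) (tree_vertices k) \<and>
     (\<forall>xs. xs \<notin> tree_vertices k \<longrightarrow> f xs = xs) \<and>
     (\<forall>xs \<in> tree_vertices k. length (f xs) = length xs) \<and>
     (\<forall>xs b. length xs < k \<longrightarrow> butlast (f (xs @ [b])) = f xs)"

definition leaf_perm :: "nat \<Rightarrow> (bool list \<Rightarrow> bool list) \<Rightarrow> bool list \<Rightarrow> bool list" where
  "leaf_perm k f = (\<lambda>xs. if length xs = k then f xs else xs)"

definition B_grp :: "nat \<Rightarrow> (bool list \<Rightarrow> bool list) monoid" where
  "B_grp k = \<lparr>carrier = {f. tree_aut k f}, monoid.mult = (\<circ>), one = id\<rparr>"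

definition G_grp :: "nat \<Rightarrow> (bool list \<Rightarrow> bool list) monoid" where
  "G_grp k = \<lparr>carrier = {f. tree_aut k f \<and> evenperm (leaf_perm k f)}, monoid.mult = (\<circ>), one = id\<rparr>"

end

theory Submission
  imports Defs
begin

text \<open>An automorphism of the tree of depth \<open>k + 1\<close> is given by a root swap \<open>a\<close> and two sections
  \<open>f\<^sub>0, f\<^sub>1\<close>, automorphisms of the subtrees of depth \<open>k\<close>; write \<open>f = (a; f\<^sub>0, f\<^sub>1)\<close>. For each level \<open>l\<close>,
  the parity of the number of vertices of level \<open>l\<close> at which \<open>f\<close> swaps the children is a
  homomorphism to \<open>\<int>/2\<close>. A swap at level \<open>l\<close> is a product of \<open>2\<^sup>k\<^sup>-\<^sup>l\<close> transpositions of leaves,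
  so the leaf permutation is even iff the parity of the lowest level \<open>k\<close> vanishes. On \<open>G\<^sub>k\<^sub>+\<^sub>1\<close> the
  two sections therefore have equal level-\<open>(k - 1)\<close> parity, and the level-\<open>(k - 1)\<close> parity of the
  right section is a further homomorphism. All commutators lie in the common kernel \<open>K\<close> of these
  homomorphisms.

  Conversely, if all level parities of \<open>w\<close> vanish, then \<open>w\<close> does not swap the root and all level
  parities of \<open>u = w\<^sub>0 w\<^sub>1\<close> vanish; by induction \<open>y v = u v y\<close> with \<open>y\<close> even on the leaves, and then
  \<open>f = (1; 1, y)\<close> and \<open>g = (0; w\<^sub>1 v, v)\<close> satisfy \<open>f g = w g f\<close>, i.e. \<open>w = [f, g]\<close>. Here \<open>f \<in> G\<close>,
  and \<open>g \<in> G\<close> exactly when \<open>w\<^sub>1\<close> has vanishing level-\<open>(k - 1)\<close> parity, which is the extra condition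
  defining \<open>K\<close>. Hence \<open>K\<close> consists of commutators, so it is the derived subgroup.\<close>

(* plain inv would be parsed as the group inverse of HOL-Algebra *)
abbreviation fun_inv :: "('a \<Rightarrow> 'a) \<Rightarrow> 'a \<Rightarrow> 'a" where
  "fun_inv f \<equiv> inv_into UNIV f"

lemma tree_aut_fixes: "tree_aut k f \<Longrightarrow> k < length xs \<Longrightarrow> f xs = xs"
  by (simp add: tree_aut_def tree_vertices_def)

lemma tree_aut_length: "tree_aut k f \<Longrightarrow> length (f xs) = length xs"
  by (cases "length xs \<le> k") (auto simp add: tree_aut_def tree_vertices_def)

lemma tree_aut_butlast: "tree_aut k f \<Longrightarrow> length xs < k \<Longrightarrow> butlast (f (xs @ [b])) = f xs"
  by (simp add: tree_aut_def)

lemma tree_aut_Nil: "tree_aut k f \<Longrightarrow> f [] = []"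
  using tree_aut_length[of k f "[]"] by simp

lemma finite_tree_vertices: "finite (tree_vertices k)"
proof -
  have "tree_vertices k \<subseteq> {xs. set xs \<subseteq> (UNIV :: bool set) \<and> length xs \<le> k}"
    by (auto simp: tree_vertices_def)
  then show ?thesis using finite_lists_length_le[of "UNIV :: bool set" k] finite_subset by auto
qed

lemma bij_tree_aut:
  assumes "tree_aut k f"
  shows "bij f"
proof -
  have "bij_betw f (- tree_vertices k) (- tree_vertices k)"
    by (rule bij_betw_cong[THEN iffD2, OF _ bij_betw_id]) (use assms in \<open>simp add: tree_aut_def\<close>)
  moreover have "bij_betw f (tree_vertices k) (tree_vertices k)"
    using assms by (simp add: tree_aut_def)
  ultimately have "bij_betw f (tree_vertices k \<union> - tree_vertices k) (tree_vertices k \<union> - tree_vertices k)"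
    using bij_betw_combine by blast
  then show ?thesis by (simp add: Compl_partition)
qed

lemma fun_inv_comp_tree_aut: "tree_aut k f \<Longrightarrow> fun_inv f \<circ> f = id"
  by (rule inv_o_cancel[OF bij_is_inj[OF bij_tree_aut]])

lemma tree_aut_comp_fun_inv: "tree_aut k f \<Longrightarrow> f \<circ> fun_inv f = id"
  using surj_iff[THEN iffD1, OF bij_is_surj[OF bij_tree_aut]] by simp

lemma tree_autI:
  assumes inj: "inj_on f (tree_vertices k)"
    and len: "\<And>xs. length (f xs) = length xs"
    and out: "\<And>xs. k < length xs \<Longrightarrow> f xs = xs"
    and par: "\<And>xs b. length xs < k \<Longrightarrow> butlast (f (xs @ [b])) = f xs"
  shows "tree_aut k f"
proof -
  have "f ` tree_vertices k \<subseteq> tree_vertices k"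
    using len by (auto simp: tree_vertices_def)
  then have "bij_betw f (tree_vertices k) (tree_vertices k)"
    unfolding bij_betw_def using inj endo_inj_surj[OF finite_tree_vertices _ inj] by simp
  then show ?thesis
    unfolding tree_aut_def using len out par by (simp add: tree_vertices_def)
qed

lemma tree_aut_snoc:
  assumes f: "tree_aut k f" and l: "length xs < k"
  obtains c where "f (xs @ [b]) = f xs @ [c]"
proof -
  obtain zs c where zs: "f (xs @ [b]) = zs @ [c]"
    using tree_aut_length[OF f, of "xs @ [b]"] by (metis length_append_singleton length_Suc_conv_rev)
  then have "zs = f xs" using tree_aut_butlast[OF f l, of b] by simp
  then show ?thesis using zs that by blast
qed

lemma tree_aut_id: "tree_aut k id"
  by (simp add: tree_aut_def)

lemma tree_aut_0: "tree_aut 0 f \<Longrightarrow> f = id"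
  by (rule ext, case_tac x) (auto simp: tree_aut_Nil tree_aut_fixes)

lemma tree_aut_comp:
  assumes f: "tree_aut k f" and g: "tree_aut k g"
  shows "tree_aut k (f \<circ> g)"
proof (rule tree_autI)
  show "inj_on (f \<circ> g) (tree_vertices k)"
    using bij_comp[OF bij_tree_aut[OF g] bij_tree_aut[OF f]] by (meson bij_is_inj inj_on_subset subset_UNIV)
  show "length ((f \<circ> g) xs) = length xs" for xs
    using f g by (simp add: tree_aut_length)
  show "(f \<circ> g) xs = xs" if "k < length xs" for xs
    using f g that by (simp add: tree_aut_fixes)
next
  fix xs :: "bool list" and b :: bool
  assume l: "length xs < k"
  obtain c where c: "g (xs @ [b]) = g xs @ [c]" using tree_aut_snoc[OF g l] .
  obtain d where "f (g xs @ [c]) = f (g xs) @ [d]"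
    using tree_aut_snoc[OF f] l tree_aut_length[OF g] by metis
  then show "butlast ((f \<circ> g) (xs @ [b])) = (f \<circ> g) xs" using c by simp
qed

lemma tree_aut_fun_inv:
  assumes f: "tree_aut k f"
  shows "tree_aut k (fun_inv f)"
proof (rule tree_autI)
  have bf: "bij f" by (rule bij_tree_aut[OF f])
  then have f_inv: "f (fun_inv f y) = y" and inv_f: "fun_inv f (f y) = y" for y
    by (simp_all add: bij_is_surj surj_f_inv_f bij_is_inj inv_f_f)
  show "inj_on (fun_inv f) (tree_vertices k)"
    by (metis f_inv inj_onI)
  show len: "length (fun_inv f xs) = length xs" for xs
    using tree_aut_length[OF f, of "fun_inv f xs"] f_inv by simp
  show "fun_inv f xs = xs" if "k < length xs" for xs
    using tree_aut_fixes[OF f that] inv_f by metis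
  fix xs :: "bool list" and b :: bool
  assume l: "length xs < k"
  obtain zs c where zs: "fun_inv f (xs @ [b]) = zs @ [c]"
    using len[of "xs @ [b]"] length_Suc_conv_rev by (metis length_append_singleton)
  have "length zs < k" using len[of "xs @ [b]"] zs l by simp
  then have "f zs = butlast (f (zs @ [c]))" using tree_aut_butlast[OF f] by simp
  also have "\<dots> = xs" using f_inv[of "xs @ [b]"] zs by simp
  finally have "fun_inv f xs = zs" using inv_f by metis
  then show "butlast (fun_inv f (xs @ [b])) = fun_inv f xs" using zs by simp
qed

lemma tree_aut_take:
  assumes f: "tree_aut k f"
  shows "length (xs @ ys) \<le> k \<Longrightarrow> take (length xs) (f (xs @ ys)) = f xs"
proof (induction ys rule: rev_induct)
  case Nil then show ?case by (simp add: tree_aut_length[OF f])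
next
  case (snoc y ys)
  have "length (xs @ ys) < k" using snoc.prems by simp
  then obtain c where "f ((xs @ ys) @ [y]) = f (xs @ ys) @ [c]" by (rule tree_aut_snoc[OF f])
  then show ?case using snoc tree_aut_length[OF f, of "xs @ ys"] by simp
qed

section \<open>Root swap and sections\<close>

definition root_swap :: "(bool list \<Rightarrow> bool list) \<Rightarrow> bool" where
  "root_swap f \<longleftrightarrow> f [False] = [True]"

definition subtree_map :: "(bool list \<Rightarrow> bool list) \<Rightarrow> bool \<Rightarrow> bool list \<Rightarrow> bool list" where
  "subtree_map f b = (\<lambda>ys. tl (f (b # ys)))"

(* the automorphism (a; f0, f1) of the introduction *)
definition join_aut ::
    "nat \<Rightarrow> bool \<Rightarrow> (bool list \<Rightarrow> bool list) \<Rightarrow> (bool list \<Rightarrow> bool list) \<Rightarrow> bool list \<Rightarrow> bool list" where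
  "join_aut k a f0 f1 xs = (case xs of
      [] \<Rightarrow> []
    | b # ys \<Rightarrow> if length ys \<le> k then (b \<noteq> a) # (if b then f1 ys else f0 ys) else xs)"

lemma join_aut_Cons:
  "length ys \<le> k \<Longrightarrow> join_aut k a f0 f1 (b # ys) = (b \<noteq> a) # (if b then f1 ys else f0 ys)"
  by (simp add: join_aut_def)

lemma tree_aut_singleton:
  assumes f: "tree_aut (Suc k) f"
  shows "f [b] = [b \<noteq> root_swap f]"
proof -
  obtain c d where c: "f [False] = [c]" and d: "f [True] = [d]"
    using tree_aut_length[OF f, of "[False]"] tree_aut_length[OF f, of "[True]"]
    by (metis length_0_conv length_Suc_conv list.size(4) add_0)
  have "f [False] \<noteq> f [True]"
    using bij_tree_aut[OF f] by (simp add: bij_is_inj inj_eq)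
  then have "d = (\<not> c)" using c d by auto
  then show ?thesis using c d by (cases b) (auto simp: root_swap_def)
qed

lemma tree_aut_Cons:
  assumes f: "tree_aut (Suc k) f" and l: "length ys \<le> k"
  shows "f (b # ys) = (b \<noteq> root_swap f) # subtree_map f b ys"
proof -
  have "take 1 (f (b # ys)) = [b \<noteq> root_swap f]"
    using tree_aut_take[OF f, of "[b]" ys] l tree_aut_singleton[OF f] by simp
  moreover have "f (b # ys) \<noteq> []" using tree_aut_length[OF f, of "b # ys"] by auto
  ultimately show ?thesis unfolding subtree_map_def by (cases "f (b # ys)") auto
qed

lemma subtree_map_fixes: "tree_aut (Suc k) f \<Longrightarrow> k < length ys \<Longrightarrow> subtree_map f b ys = ys"
  using tree_aut_fixes[of "Suc k" f "b # ys"] by (simp add: subtree_map_def)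

lemma tree_aut_subtree_map:
  assumes f: "tree_aut (Suc k) f"
  shows "tree_aut k (subtree_map f b)"
proof (rule tree_autI)
  show len: "length (subtree_map f b ys) = length ys" for ys
    using tree_aut_length[OF f, of "b # ys"] subtree_map_fixes[OF f, of ys b]
    by (cases "length ys \<le> k") (simp_all add: subtree_map_def)
  show "inj_on (subtree_map f b) (tree_vertices k)"
  proof (rule inj_onI)
    fix ys zs assume "ys \<in> tree_vertices k" "zs \<in> tree_vertices k"
      and "subtree_map f b ys = subtree_map f b zs"
    then have "f (b # ys) = f (b # zs)" using tree_aut_Cons[OF f] by (simp add: tree_vertices_def)
    then show "ys = zs" using bij_tree_aut[OF f] by (simp add: bij_is_inj inj_eq)
  qed
  show "subtree_map f b ys = ys" if "k < length ys" for ys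
    using subtree_map_fixes[OF f that] .
  show "butlast (subtree_map f b (ys @ [c])) = subtree_map f b ys" if "length ys < k" for ys c
    using tree_aut_butlast[OF f, of "b # ys" c] that by (simp add: subtree_map_def butlast_tl)
qed

lemma tree_aut_join_aut:
  assumes f0: "tree_aut k f0" and f1: "tree_aut k f1"
  shows "tree_aut (Suc k) (join_aut k a f0 f1)"
proof (rule tree_autI)
  let ?m = "join_aut k a f0 f1"
  show len: "length (?m xs) = length xs" for xs
    using tree_aut_length[OF f0] tree_aut_length[OF f1] by (cases xs) (auto simp: join_aut_def)
  show "inj_on ?m (tree_vertices (Suc k))"
  proof (rule inj_onI)
    fix xs zs assume xs: "xs \<in> tree_vertices (Suc k)" and zs: "zs \<in> tree_vertices (Suc k)"
      and e: "?m xs = ?m zs"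
    show "xs = zs"
    proof (cases xs)
      case Nil then show ?thesis using e len[of zs] by (simp add: join_aut_def)
    next
      case (Cons b ys)
      then obtain c ys' where zs': "zs = c # ys'" using e len[of xs] len[of zs] by (cases zs) auto
      have "length ys \<le> k" "length ys' \<le> k" using xs zs Cons zs' by (auto simp: tree_vertices_def)
      then show ?thesis
        using e Cons zs' bij_is_inj[OF bij_tree_aut[OF f0]] bij_is_inj[OF bij_tree_aut[OF f1]]
        by (cases b; cases c) (auto simp: join_aut_Cons inj_eq)
    qed
  qed
  show "?m xs = xs" if "Suc k < length xs" for xs
    using that by (cases xs) (simp_all add: join_aut_def)
  show "butlast (?m (xs @ [c])) = ?m xs" if "length xs < Suc k" for xs c
  proof (cases xs)
    case Nil then show ?thesis using tree_aut_Nil[OF f0] tree_aut_Nil[OF f1] by (simp add: join_aut_def)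
  next
    case (Cons b ys)
    let ?h = "if b then f1 else f0"
    have h: "tree_aut k ?h" using f0 f1 by simp
    have ys: "length ys < k" using that Cons by simp
    have "?h (ys @ [c]) \<noteq> []" using tree_aut_length[OF h, of "ys @ [c]"] by auto
    then show ?thesis using Cons ys tree_aut_butlast[OF h ys, of c] by (cases b) (simp_all add: join_aut_Cons)
  qed
qed

lemma join_aut_decomp:
  assumes f: "tree_aut (Suc k) f"
  shows "f = join_aut k (root_swap f) (subtree_map f False) (subtree_map f True)"
proof
  fix xs show "f xs = join_aut k (root_swap f) (subtree_map f False) (subtree_map f True) xs"
  proof (cases xs)
    case Nil then show ?thesis by (simp add: join_aut_def tree_aut_Nil[OF f])
  next
    case (Cons b ys)
    then show ?thesis
      using tree_aut_Cons[OF f, of ys b] tree_aut_fixes[OF f, of xs]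
      by (cases b) (auto simp: join_aut_def)
  qed
qed

lemma root_swap_join_aut: "tree_aut k f0 \<Longrightarrow> tree_aut k f1 \<Longrightarrow> root_swap (join_aut k a f0 f1) = a"
  by (simp add: root_swap_def join_aut_def tree_aut_Nil)

lemma subtree_map_join_aut:
  assumes "tree_aut k f0" "tree_aut k f1"
  shows "subtree_map (join_aut k a f0 f1) b = (if b then f1 else f0)"
  using tree_aut_fixes[OF assms(1)] tree_aut_fixes[OF assms(2)]
  by (cases b) (auto simp: fun_eq_iff subtree_map_def join_aut_def)

lemma tree_aut_eqI:
  assumes "tree_aut (Suc k) f" "tree_aut (Suc k) g" "root_swap f = root_swap g"
    "subtree_map f False = subtree_map g False" "subtree_map f True = subtree_map g True"
  shows "f = g"
  using join_aut_decomp[OF assms(1)] join_aut_decomp[OF assms(2)] assms(3-5) by metis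

lemma root_swap_id: "\<not> root_swap id"
  by (simp add: root_swap_def)

lemma subtree_map_id: "subtree_map id b = id"
  by (simp add: subtree_map_def fun_eq_iff)

lemma root_swap_comp:
  assumes "tree_aut (Suc k) f" "tree_aut (Suc k) g"
  shows "root_swap (f \<circ> g) = (root_swap f \<noteq> root_swap g)"
proof -
  have "(f \<circ> g) [False] = [root_swap g \<noteq> root_swap f]"
    using tree_aut_singleton[OF assms(1), of "root_swap g"] tree_aut_singleton[OF assms(2), of False]
    by simp
  then show ?thesis unfolding root_swap_def by auto
qed

lemma subtree_map_comp:
  assumes f: "tree_aut (Suc k) f" and g: "tree_aut (Suc k) g"
  shows "subtree_map (f \<circ> g) b = subtree_map f (b \<noteq> root_swap g) \<circ> subtree_map g b"
proof
  fix ys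
  have unfold: "subtree_map (f \<circ> g) b ys = tl (f (g (b # ys)))" by (simp add: subtree_map_def)
  show "subtree_map (f \<circ> g) b ys = (subtree_map f (b \<noteq> root_swap g) \<circ> subtree_map g b) ys"
  proof (cases "length ys \<le> k")
    case True
    then have "length (subtree_map g b ys) \<le> k"
      using tree_aut_length[OF tree_aut_subtree_map[OF g]] by simp
    then show ?thesis
      using unfold tree_aut_Cons[OF g True, of b] tree_aut_Cons[OF f, of "subtree_map g b ys"] by simp
  next
    case False
    then show ?thesis
      using unfold subtree_map_fixes[OF f] subtree_map_fixes[OF g] tree_aut_fixes[OF f, of "b # ys"]
        tree_aut_fixes[OF g, of "b # ys"]
      by simp
  qed
qed

lemma tree_aut_1_eq_id: "tree_aut (Suc 0) f \<Longrightarrow> \<not> root_swap f \<Longrightarrow> f = id"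
  by (rule tree_aut_eqI[OF _ tree_aut_id])
    (simp_all add: root_swap_id subtree_map_id tree_aut_0[OF tree_aut_subtree_map])

section \<open>Level parities\<close>

text \<open>\<open>level_parity l f\<close> is the parity of the number of vertices of level \<open>l\<close> at which \<open>f\<close>
  swaps the two children.\<close>

fun level_parity :: "nat \<Rightarrow> (bool list \<Rightarrow> bool list) \<Rightarrow> bool" where
  "level_parity 0 f = root_swap f"
| "level_parity (Suc l) f = (level_parity l (subtree_map f False) \<noteq> level_parity l (subtree_map f True))"

lemma level_parity_id: "\<not> level_parity l id"
proof (induction l)
  case 0 show ?case by (simp only: level_parity.simps root_swap_id) simp
next
  case (Suc l) show ?case by (simp only: level_parity.simps subtree_map_id Suc.IH)
qed

lemma level_parity_comp:
  "tree_aut k f \<Longrightarrow> tree_aut k g \<Longrightarrow> l < k \<Longrightarrow>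
    level_parity l (f \<circ> g) = (level_parity l f \<noteq> level_parity l g)"
proof (induction l arbitrary: k f g)
  case 0
  then obtain k' where "k = Suc k'" by (cases k) auto
  then show ?case using 0 root_swap_comp by (simp only: level_parity.simps)
next
  case (Suc l)
  then obtain k' where k: "k = Suc k'" by (cases k) auto
  have f: "tree_aut (Suc k') f" and g: "tree_aut (Suc k') g" and l: "l < k'" using Suc k by auto
  have IH: "level_parity l (subtree_map f c \<circ> subtree_map g b)
      = (level_parity l (subtree_map f c) \<noteq> level_parity l (subtree_map g b))" for c b
    using Suc.IH[OF tree_aut_subtree_map[OF f] tree_aut_subtree_map[OF g] l] .
  have sections: "subtree_map (f \<circ> g) False = subtree_map f (root_swap g) \<circ> subtree_map g False"
    "subtree_map (f \<circ> g) True = subtree_map f (\<not> root_swap g) \<circ> subtree_map g True"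
    using subtree_map_comp[OF f g] by simp_all
  show ?case
    by (cases "root_swap g") (simp_all only: level_parity.simps sections IH, auto)
qed

lemma level_parity_fun_inv:
  "tree_aut k f \<Longrightarrow> l < k \<Longrightarrow> level_parity l (fun_inv f) = level_parity l f"
  using level_parity_comp[OF _ tree_aut_fun_inv] tree_aut_comp_fun_inv level_parity_id by metis

lemma vanishing_level_parities_sections_product:
  assumes w: "tree_aut (Suc (Suc j)) w" and parities: "\<forall>l\<le>Suc j. \<not> level_parity l w"
  shows "tree_aut (Suc j) (subtree_map w False \<circ> subtree_map w True)"
    and "\<forall>l\<le>j. \<not> level_parity l (subtree_map w False \<circ> subtree_map w True)"
  using tree_aut_comp[OF tree_aut_subtree_map[OF w] tree_aut_subtree_map[OF w]]
    level_parity_comp[OF tree_aut_subtree_map[OF w] tree_aut_subtree_map[OF w]] parities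
  by auto

section \<open>Parity of the leaf permutation\<close>

definition cons_perm :: "'a \<Rightarrow> ('a list \<Rightarrow> 'a list) \<Rightarrow> 'a list \<Rightarrow> 'a list" where
  "cons_perm b p xs = (case xs of [] \<Rightarrow> [] | c # ys \<Rightarrow> if c = b then b # p ys else c # ys)"

lemma cons_perm_id: "cons_perm b id = id"
  by (auto simp: fun_eq_iff cons_perm_def split: list.split)

lemma cons_perm_transpose:
  "cons_perm b (transpose x y \<circ> p) = transpose (b # x) (b # y) \<circ> cons_perm b p"
  by (auto simp: fun_eq_iff cons_perm_def transpose_def split: list.split)

lemma swapidseq_cons_perm: "swapidseq n p \<Longrightarrow> swapidseq n (cons_perm b p)"
proof (induction rule: swapidseq.induct)
  \<comment> \<open>the base case of \<open>swapidseq.induct\<close> is stated for \<open>\<lambda>x. x\<close> rather than \<open>id\<close>\<close>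
  case id then show ?case using cons_perm_id[of b] by (simp add: id_def)
next
  case (comp_Suc n p x y)
  have "swapidseq (Suc n) (transpose (b # x) (b # y) \<circ> cons_perm b p)"
    by (rule swapidseq.comp_Suc[OF comp_Suc.IH]) (use comp_Suc.hyps(2) in simp)
  then show ?case unfolding cons_perm_transpose .
qed

lemma
  assumes "permutation p"
  shows permutation_cons_perm: "permutation (cons_perm b p)"
    and evenperm_cons_perm: "evenperm (cons_perm b p) = evenperm p"
proof -
  obtain n where n: "swapidseq n p" using assms unfolding permutation_def by blast
  show "permutation (cons_perm b p)" unfolding permutation_def using swapidseq_cons_perm[OF n] by blast
  show "evenperm (cons_perm b p) = evenperm p"
    using evenperm_unique[OF swapidseq_cons_perm[OF n] refl] evenperm_unique[OF n refl] by simp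
qed

lemma permutation_involution_of_length:
  fixes p :: "'a :: finite list \<Rightarrow> 'a list"
  assumes "p \<circ> p = id" and "\<And>xs. length xs \<noteq> n \<Longrightarrow> p xs = xs"
  shows "permutation p"
proof -
  have "{xs. p xs \<noteq> xs} \<subseteq> {xs. length xs = n}" using assms(2) by blast
  then have "finite {xs. p xs \<noteq> xs}"
    using finite_lists_length_eq[of "UNIV :: 'a set" n] finite_subset by auto
  then show ?thesis using o_bij[OF assms(1) assms(1)] by (simp add: permutation)
qed

text \<open>\<open>flip_head n\<close> is the leaf permutation of the root swap of the tree of depth \<open>n + 1\<close>.\<close>

definition flip_head :: "nat \<Rightarrow> bool list \<Rightarrow> bool list" where
  "flip_head n xs = (case xs of c # ys \<Rightarrow> if length ys = n then (\<not> c) # ys else xs | [] \<Rightarrow> [])"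

definition flip_head_if :: "bool \<Rightarrow> nat \<Rightarrow> bool list \<Rightarrow> bool list" where
  "flip_head_if d n xs =
    (case xs of c # d' # zs \<Rightarrow> if length zs = n \<and> d' = d then (\<not> c) # d' # zs else xs | _ \<Rightarrow> xs)"

definition flip_second :: "nat \<Rightarrow> bool list \<Rightarrow> bool list" where
  "flip_second n xs = (case xs of c # d # zs \<Rightarrow> if length zs = n then c # (\<not> d) # zs else xs | _ \<Rightarrow> xs)"

lemma flip_head_0: "flip_head 0 = transpose [False] [True]"
proof
  fix xs show "flip_head 0 xs = transpose [False] [True] xs"
    by (cases xs rule: remdups_adj.cases) (auto simp: flip_head_def transpose_def)
qed

lemma flip_head_Suc: "flip_head (Suc n) = flip_head_if False n \<circ> flip_head_if True n"
  by (auto simp: fun_eq_iff flip_head_if_def flip_head_def split: list.split)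

lemma flip_head_if_True: "flip_head_if True n = flip_second n \<circ> flip_head_if False n \<circ> flip_second n"
  by (auto simp: fun_eq_iff flip_head_if_def flip_second_def split: list.split)

lemma permutation_flip_head_if: "permutation (flip_head_if d n)"
  by (rule permutation_involution_of_length[of _ "Suc (Suc n)"])
    (auto simp: fun_eq_iff flip_head_if_def split: list.split)

lemma permutation_flip_second: "permutation (flip_second n)"
  by (rule permutation_involution_of_length[of _ "Suc (Suc n)"])
    (auto simp: fun_eq_iff flip_second_def split: list.split)

lemma permutation_flip_head: "permutation (flip_head n)"
  by (cases n) (simp_all add: flip_head_0 permutation_swap_id flip_head_Suc
      permutation_compose permutation_flip_head_if)

lemma evenperm_flip_head: "evenperm (flip_head n) \<longleftrightarrow> n \<noteq> 0"
proof (cases n)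
  case 0 then show ?thesis by (simp add: flip_head_0 evenperm_swap)
next
  case (Suc m)
  have "evenperm (flip_head_if True m) = evenperm (flip_head_if False m)"
    unfolding flip_head_if_True
    by (auto simp: evenperm_comp permutation_flip_second permutation_flip_head_if permutation_compose)
  then show ?thesis
    using Suc by (simp add: flip_head_Suc evenperm_comp permutation_flip_head_if)
qed

lemma leaf_perm_id: "leaf_perm k id = id"
  by (simp add: leaf_perm_def fun_eq_iff)

lemma leaf_perm_join_aut:
  assumes "tree_aut k f0" "tree_aut k f1"
  shows "leaf_perm (Suc k) (join_aut k a f0 f1)
    = (if a then flip_head k else id) \<circ> cons_perm False (leaf_perm k f0) \<circ> cons_perm True (leaf_perm k f1)"
proof
  fix xs
  show "leaf_perm (Suc k) (join_aut k a f0 f1) xs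
    = ((if a then flip_head k else id) \<circ> cons_perm False (leaf_perm k f0)
        \<circ> cons_perm True (leaf_perm k f1)) xs"
  proof (cases xs)
    case (Cons c ys)
    then show ?thesis
      using tree_aut_length[OF assms(1), of ys] tree_aut_length[OF assms(2), of ys]
      by (cases c; cases "length ys = k")
        (simp_all add: leaf_perm_def cons_perm_def flip_head_def join_aut_def)
  qed (simp add: leaf_perm_def cons_perm_def flip_head_def)
qed

lemma leaf_perm_evenperm:
  "tree_aut (Suc k) f \<Longrightarrow>
    permutation (leaf_perm (Suc k) f) \<and> (evenperm (leaf_perm (Suc k) f) \<longleftrightarrow> \<not> level_parity k f)"
proof (induction k arbitrary: f)
  case 0
  have "subtree_map f b = id" for b using tree_aut_0[OF tree_aut_subtree_map[OF 0]] .
  then have "join_aut 0 (root_swap f) id id = f" using join_aut_decomp[OF 0, symmetric] by simp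
  then have "leaf_perm (Suc 0) f = (if root_swap f then flip_head 0 else id)"
    using leaf_perm_join_aut[OF tree_aut_id tree_aut_id, of 0 "root_swap f"]
    by (simp add: leaf_perm_id cons_perm_id)
  then show ?case using permutation_flip_head[of 0] evenperm_flip_head[of 0] by simp
next
  case (Suc k)
  let ?s = "subtree_map f" and ?r = "if root_swap f then flip_head (Suc k) else id"
  let ?q = "cons_perm False (leaf_perm (Suc k) (?s False)) \<circ> cons_perm True (leaf_perm (Suc k) (?s True))"
  have s: "tree_aut (Suc k) (?s b)" for b using tree_aut_subtree_map[OF Suc.prems] .
  have e: "leaf_perm (Suc (Suc k)) f = ?r \<circ> ?q"
    using leaf_perm_join_aut[OF s[of False] s[of True], of "root_swap f"]
    unfolding join_aut_decomp[OF Suc.prems, symmetric] comp_assoc .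
  have r: "permutation ?r" "evenperm ?r"
    using permutation_flip_head evenperm_flip_head by auto
  have p: "permutation (cons_perm c (leaf_perm (Suc k) (?s b)))"
    and ev: "evenperm (cons_perm c (leaf_perm (Suc k) (?s b))) \<longleftrightarrow> \<not> level_parity k (?s b)" for b c
    using permutation_cons_perm[OF conjunct1[OF Suc.IH[OF s]]]
      evenperm_cons_perm[OF conjunct1[OF Suc.IH[OF s]]] conjunct2[OF Suc.IH[OF s]] by simp_all
  have q: "permutation ?q" "evenperm ?q \<longleftrightarrow> \<not> level_parity (Suc k) f"
    using permutation_compose[OF p p] evenperm_comp[OF p p] ev by auto
  show ?case
    unfolding e using permutation_compose[OF r(1) q(1)] evenperm_comp[OF r(1) q(1)] r(2) q(2) by blast
qed

lemma G_grp_mult: "x \<otimes>\<^bsub>G_grp k\<^esub> y = x \<circ> y"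
  by (simp add: G_grp_def)

lemma carrier_G_grp_Suc: "f \<in> carrier (G_grp (Suc n)) \<longleftrightarrow> tree_aut (Suc n) f \<and> \<not> level_parity n f"
  using leaf_perm_evenperm[of n f] by (auto simp: G_grp_def)

lemma id_in_G_grp: "id \<in> carrier (G_grp (Suc n))"
  by (simp add: carrier_G_grp_Suc tree_aut_id level_parity_id)

lemma comp_in_G_grp:
  "f \<in> carrier (G_grp (Suc n)) \<Longrightarrow> g \<in> carrier (G_grp (Suc n)) \<Longrightarrow> f \<circ> g \<in> carrier (G_grp (Suc n))"
  unfolding carrier_G_grp_Suc using tree_aut_comp level_parity_comp[OF _ _ lessI] by blast

lemma fun_inv_in_G_grp: "f \<in> carrier (G_grp (Suc n)) \<Longrightarrow> fun_inv f \<in> carrier (G_grp (Suc n))"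
  unfolding carrier_G_grp_Suc using tree_aut_fun_inv level_parity_fun_inv[OF _ lessI] by blast

lemma G_grp_one: "\<one>\<^bsub>G_grp k\<^esub> = id"
  by (simp add: G_grp_def)

lemma group_G_grp: "group (G_grp (Suc n))"
proof (rule groupI)
  fix x y z
  show "x \<in> carrier (G_grp (Suc n)) \<Longrightarrow> y \<in> carrier (G_grp (Suc n)) \<Longrightarrow>
      x \<otimes>\<^bsub>G_grp (Suc n)\<^esub> y \<in> carrier (G_grp (Suc n))"
    unfolding G_grp_mult by (rule comp_in_G_grp)
  show "\<one>\<^bsub>G_grp (Suc n)\<^esub> \<in> carrier (G_grp (Suc n))"
    unfolding G_grp_one by (rule id_in_G_grp)
  show "x \<otimes>\<^bsub>G_grp (Suc n)\<^esub> y \<otimes>\<^bsub>G_grp (Suc n)\<^esub> z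
      = x \<otimes>\<^bsub>G_grp (Suc n)\<^esub> (y \<otimes>\<^bsub>G_grp (Suc n)\<^esub> z)"
    unfolding G_grp_mult by (rule comp_assoc)
  show "\<one>\<^bsub>G_grp (Suc n)\<^esub> \<otimes>\<^bsub>G_grp (Suc n)\<^esub> x = x"
    unfolding G_grp_mult G_grp_one by simp
  assume x: "x \<in> carrier (G_grp (Suc n))"
  show "\<exists>y\<in>carrier (G_grp (Suc n)). y \<otimes>\<^bsub>G_grp (Suc n)\<^esub> x = \<one>\<^bsub>G_grp (Suc n)\<^esub>"
  proof
    show "fun_inv x \<otimes>\<^bsub>G_grp (Suc n)\<^esub> x = \<one>\<^bsub>G_grp (Suc n)\<^esub>"
      using x unfolding G_grp_mult G_grp_one carrier_G_grp_Suc by (blast intro: fun_inv_comp_tree_aut)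
  qed (rule fun_inv_in_G_grp[OF x])
qed

lemma G_grp_inv:
  assumes f: "f \<in> carrier (G_grp (Suc n))"
  shows "inv\<^bsub>G_grp (Suc n)\<^esub> f = fun_inv f"
proof (rule group.inv_equality[OF group_G_grp _ f fun_inv_in_G_grp[OF f]])
  show "fun_inv f \<otimes>\<^bsub>G_grp (Suc n)\<^esub> f = \<one>\<^bsub>G_grp (Suc n)\<^esub>"
    using f unfolding G_grp_mult G_grp_one carrier_G_grp_Suc by (blast intro: fun_inv_comp_tree_aut)
qed

section \<open>Commutators from vanishing level parities\<close>

lemma commutator_of_relation:
  assumes "bij f" "bij g" "f \<circ> g = h \<circ> g \<circ> f"
  shows "h = f \<circ> g \<circ> fun_inv f \<circ> fun_inv g"
proof -
  have "f \<circ> g \<circ> fun_inv f \<circ> fun_inv g = h \<circ> g \<circ> (f \<circ> fun_inv f) \<circ> fun_inv g"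
    using assms(3) by (simp add: comp_assoc)
  also have "\<dots> = h"
    using assms(1,2) by (simp add: comp_assoc bij_is_surj surj_iff[THEN iffD1])
  finally show ?thesis by simp
qed

lemma commutator_relation_step:
  assumes w: "tree_aut (Suc (Suc j)) w" "\<forall>l\<le>Suc j. \<not> level_parity l w"
    and y: "tree_aut (Suc j) y" "\<not> level_parity j y"
    and v: "tree_aut (Suc j) v"
    and r: "y \<circ> v = (subtree_map w False \<circ> subtree_map w True) \<circ> v \<circ> y"
  shows "\<exists>f g. tree_aut (Suc (Suc j)) f \<and> \<not> level_parity (Suc j) f \<and>
    tree_aut (Suc (Suc j)) g \<and> level_parity (Suc j) g = level_parity j (subtree_map w True) \<and>
    f \<circ> g = w \<circ> g \<circ> f"
proof (intro exI conjI)
  let ?w0 = "subtree_map w False" and ?w1 = "subtree_map w True"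
  let ?f = "join_aut (Suc j) True id y" and ?g = "join_aut (Suc j) False (?w1 \<circ> v) v"
  have w1v: "tree_aut (Suc j) (?w1 \<circ> v)" using tree_aut_comp[OF tree_aut_subtree_map[OF w(1)] v] .
  show f: "tree_aut (Suc (Suc j)) ?f" using tree_aut_join_aut[OF tree_aut_id y(1)] .
  show g: "tree_aut (Suc (Suc j)) ?g" using tree_aut_join_aut[OF w1v v] .
  note f_parts = root_swap_join_aut[OF tree_aut_id y(1)] subtree_map_join_aut[OF tree_aut_id y(1)]
  note g_parts = root_swap_join_aut[OF w1v v] subtree_map_join_aut[OF w1v v]
  show "\<not> level_parity (Suc j) ?f" using f_parts y(2) level_parity_id by simp
  show "level_parity (Suc j) ?g = level_parity j ?w1"
    using g_parts level_parity_comp[OF tree_aut_subtree_map[OF w(1)] v, of j] by auto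
  have wg: "tree_aut (Suc (Suc j)) (w \<circ> ?g)" using tree_aut_comp[OF w(1) g] .
  show "?f \<circ> ?g = w \<circ> ?g \<circ> ?f"
  proof (rule tree_aut_eqI[OF tree_aut_comp[OF f g] tree_aut_comp[OF wg f]])
    show "root_swap (?f \<circ> ?g) = root_swap (w \<circ> ?g \<circ> ?f)"
      using root_swap_comp[OF f g] root_swap_comp[OF wg f] root_swap_comp[OF w(1) g] f_parts g_parts
        w(2)[rule_format, of 0]
      by simp
    have "subtree_map (?f \<circ> ?g) False = ?w1 \<circ> v"
      using subtree_map_comp[OF f g, of False] f_parts g_parts by simp
    also have "\<dots> = subtree_map (w \<circ> ?g \<circ> ?f) False"
      using subtree_map_comp[OF wg f, of False] subtree_map_comp[OF w(1) g, of True] f_parts g_parts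
      by simp
    finally show "subtree_map (?f \<circ> ?g) False = subtree_map (w \<circ> ?g \<circ> ?f) False" .
    have "subtree_map (?f \<circ> ?g) True = y \<circ> v"
      using subtree_map_comp[OF f g, of True] f_parts g_parts by simp
    also have "\<dots> = (?w0 \<circ> (?w1 \<circ> v)) \<circ> y" using r by (simp add: comp_assoc)
    also have "\<dots> = subtree_map (w \<circ> ?g \<circ> ?f) True"
      using subtree_map_comp[OF wg f, of True] subtree_map_comp[OF w(1) g, of False] f_parts g_parts
      by simp
    finally show "subtree_map (?f \<circ> ?g) True = subtree_map (w \<circ> ?g \<circ> ?f) True" .
  qed
qed

lemma commutator_relation_of_vanishing_parities:
  "tree_aut (Suc m) w \<Longrightarrow> \<forall>l\<le>m. \<not> level_parity l w \<Longrightarrow>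
    \<exists>y v. tree_aut (Suc m) y \<and> \<not> level_parity m y \<and> tree_aut (Suc m) v \<and> y \<circ> v = w \<circ> v \<circ> y"
proof (induction m arbitrary: w)
  case 0
  then have "w = id" using tree_aut_1_eq_id by auto
  then show ?case using tree_aut_id level_parity_id by (metis comp_id)
next
  case (Suc j)
  obtain y v where "tree_aut (Suc j) y" "\<not> level_parity j y" "tree_aut (Suc j) v"
      "y \<circ> v = (subtree_map w False \<circ> subtree_map w True) \<circ> v \<circ> y"
    using Suc.IH[OF vanishing_level_parities_sections_product[OF Suc.prems]] by blast
  then show ?case using commutator_relation_step[OF Suc.prems] by blast
qed

text \<open>For \<open>n = 0\<close> the sections are trivial, so the truncated \<open>n - 1\<close> does no harm.\<close>

definition right_parity :: "nat \<Rightarrow> (bool list \<Rightarrow> bool list) \<Rightarrow> bool" where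
  "right_parity n f = level_parity (n - 1) (subtree_map f True)"

lemma right_parity_id: "\<not> right_parity n id"
  by (simp add: right_parity_def subtree_map_id level_parity_id)

lemma right_parity_comp:
  assumes f: "f \<in> carrier (G_grp (Suc n))" and g: "g \<in> carrier (G_grp (Suc n))"
  shows "right_parity n (f \<circ> g) = (right_parity n f \<noteq> right_parity n g)"
proof (cases n)
  case 0
  have "\<not> right_parity 0 h" if "tree_aut (Suc 0) h" for h
    using tree_aut_0[OF tree_aut_subtree_map[OF that]] by (simp add: right_parity_def level_parity_id)
  then show ?thesis using 0 f g tree_aut_comp by (simp add: carrier_G_grp_Suc)
next
  case (Suc j)
  then have tf: "tree_aut (Suc (Suc j)) f" and tg: "tree_aut (Suc (Suc j)) g"
    and halves: "level_parity j (subtree_map f False) = level_parity j (subtree_map f True)"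
    using f g by (simp_all add: carrier_G_grp_Suc)
  show ?thesis
    using Suc subtree_map_comp[OF tf tg, of True] halves
      level_parity_comp[OF tree_aut_subtree_map[OF tf] tree_aut_subtree_map[OF tg], of j]
    by (cases "root_swap g") (simp_all add: right_parity_def)
qed

lemma right_parity_fun_inv:
  assumes f: "f \<in> carrier (G_grp (Suc n))"
  shows "right_parity n (fun_inv f) = right_parity n f"
  using right_parity_comp[OF f fun_inv_in_G_grp[OF f]] right_parity_id tree_aut_comp_fun_inv f
  by (metis carrier_G_grp_Suc)

definition parity_kernel :: "nat \<Rightarrow> (bool list \<Rightarrow> bool list) set" where
  "parity_kernel n =
    {h. tree_aut (Suc n) h \<and> (\<forall>l\<le>n. \<not> level_parity l h) \<and> \<not> right_parity n h}"

lemma parity_kernel_subset: "parity_kernel n \<subseteq> carrier (G_grp (Suc n))"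
  by (auto simp: parity_kernel_def carrier_G_grp_Suc)

lemma subgroup_parity_kernel: "subgroup (parity_kernel n) (G_grp (Suc n))"
proof (rule group.subgroupI[OF group_G_grp parity_kernel_subset])
  show "parity_kernel n \<noteq> {}"
    using tree_aut_id level_parity_id right_parity_id by (auto simp: parity_kernel_def)
  fix a b assume a: "a \<in> parity_kernel n"
  then have a_G: "a \<in> carrier (G_grp (Suc n))" and ta: "tree_aut (Suc n) a"
    using parity_kernel_subset by (auto simp: parity_kernel_def)
  have "level_parity l (fun_inv a) = level_parity l a" if "l \<le> n" for l
    using level_parity_fun_inv[OF ta] that by simp
  then show "inv\<^bsub>G_grp (Suc n)\<^esub> a \<in> parity_kernel n"
    using a tree_aut_fun_inv[OF ta] right_parity_fun_inv[OF a_G]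
    by (simp add: G_grp_inv[OF a_G] parity_kernel_def)
  assume b: "b \<in> parity_kernel n"
  then have b_G: "b \<in> carrier (G_grp (Suc n))" and tb: "tree_aut (Suc n) b"
    using parity_kernel_subset by (auto simp: parity_kernel_def)
  have "level_parity l (a \<circ> b) = (level_parity l a \<noteq> level_parity l b)" if "l \<le> n" for l
    using level_parity_comp[OF ta tb] that by simp
  then show "a \<otimes>\<^bsub>G_grp (Suc n)\<^esub> b \<in> parity_kernel n"
    using a b tree_aut_comp[OF ta tb] right_parity_comp[OF a_G b_G]
    by (simp add: G_grp_mult parity_kernel_def)
qed

lemma commutator_in_parity_kernel:
  assumes f: "f \<in> carrier (G_grp (Suc n))" and g: "g \<in> carrier (G_grp (Suc n))"
  shows "f \<circ> g \<circ> fun_inv f \<circ> fun_inv g \<in> parity_kernel n"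
proof -
  have tf: "tree_aut (Suc n) f" and tg: "tree_aut (Suc n) g" using f g by (simp_all add: carrier_G_grp_Suc)
  have "\<not> level_parity l (f \<circ> g \<circ> fun_inv f \<circ> fun_inv g)" if "l \<le> n" for l
  proof -
    have l: "l < Suc n" using that by simp
    have hom: "level_parity l (h \<circ> h') = (level_parity l h \<noteq> level_parity l h')"
      if "tree_aut (Suc n) h" "tree_aut (Suc n) h'" for h h'
      using level_parity_comp[OF that l] .
    show ?thesis
      using tf tg by (auto simp: hom tree_aut_comp tree_aut_fun_inv level_parity_fun_inv[OF _ l])
  qed
  moreover have "\<not> right_parity n (f \<circ> g \<circ> fun_inv f \<circ> fun_inv g)"
    using f g by (auto simp: comp_in_G_grp fun_inv_in_G_grp right_parity_comp right_parity_fun_inv)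
  ultimately show ?thesis
    using f g by (simp add: parity_kernel_def carrier_G_grp_Suc tree_aut_comp tree_aut_fun_inv)
qed

lemma parity_kernel_commutator:
  assumes h: "h \<in> parity_kernel n"
  obtains f g where "f \<in> carrier (G_grp (Suc n))" "g \<in> carrier (G_grp (Suc n))"
    "h = f \<circ> g \<circ> fun_inv f \<circ> fun_inv g"
proof (cases n)
  case 0
  then have "h = id" using h tree_aut_1_eq_id by (auto simp: parity_kernel_def)
  then show ?thesis using that[OF id_in_G_grp id_in_G_grp] by simp
next
  case (Suc j)
  have h': "tree_aut (Suc (Suc j)) h" "\<forall>l\<le>Suc j. \<not> level_parity l h"
    and right: "\<not> level_parity j (subtree_map h True)"
    using h Suc by (auto simp: parity_kernel_def right_parity_def)
  obtain y v where "tree_aut (Suc j) y" "\<not> level_parity j y" "tree_aut (Suc j) v"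
      "y \<circ> v = (subtree_map h False \<circ> subtree_map h True) \<circ> v \<circ> y"
    using commutator_relation_of_vanishing_parities[OF vanishing_level_parities_sections_product[OF h']]
    by blast
  then obtain f g where f: "tree_aut (Suc (Suc j)) f" "\<not> level_parity (Suc j) f"
    and g: "tree_aut (Suc (Suc j)) g" "level_parity (Suc j) g = level_parity j (subtree_map h True)"
    and fg: "f \<circ> g = h \<circ> g \<circ> f"
    using commutator_relation_step[OF h'] by blast
  have "f \<in> carrier (G_grp (Suc n))" "g \<in> carrier (G_grp (Suc n))"
    using f g right Suc carrier_G_grp_Suc by simp_all
  then show ?thesis
    using that commutator_of_relation[OF bij_tree_aut[OF f(1)] bij_tree_aut[OF g(1)] fg] by blast
qed

lemma G_grp_commutator:
  "f \<in> carrier (G_grp (Suc n)) \<Longrightarrow> g \<in> carrier (G_grp (Suc n)) \<Longrightarrow>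
    f \<otimes>\<^bsub>G_grp (Suc n)\<^esub> g \<otimes>\<^bsub>G_grp (Suc n)\<^esub> inv\<^bsub>G_grp (Suc n)\<^esub> f \<otimes>\<^bsub>G_grp (Suc n)\<^esub> inv\<^bsub>G_grp (Suc n)\<^esub> g
    = f \<circ> g \<circ> fun_inv f \<circ> fun_inv g"
  by (simp only: G_grp_mult G_grp_inv)

lemma derived_set_G_grp: "derived_set (G_grp (Suc n)) (carrier (G_grp (Suc n))) = parity_kernel n"
proof
  show "derived_set (G_grp (Suc n)) (carrier (G_grp (Suc n))) \<subseteq> parity_kernel n"
    using commutator_in_parity_kernel by (auto simp only: G_grp_commutator)
  show "parity_kernel n \<subseteq> derived_set (G_grp (Suc n)) (carrier (G_grp (Suc n)))"
  proof
    fix h assume "h \<in> parity_kernel n"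
    then obtain f g where f: "f \<in> carrier (G_grp (Suc n))" and g: "g \<in> carrier (G_grp (Suc n))"
      and h: "h = f \<circ> g \<circ> fun_inv f \<circ> fun_inv g"
      by (rule parity_kernel_commutator)
    show "h \<in> derived_set (G_grp (Suc n)) (carrier (G_grp (Suc n)))"
      using f g unfolding h G_grp_commutator[OF f g, symmetric] by blast
  qed
qed

lemma derived_set_eq_commutators:
  "derived_set G H = {h1 \<otimes>\<^bsub>G\<^esub> h2 \<otimes>\<^bsub>G\<^esub> inv\<^bsub>G\<^esub> h1 \<otimes>\<^bsub>G\<^esub> inv\<^bsub>G\<^esub> h2 | h1 h2. h1 \<in> H \<and> h2 \<in> H}"
  by auto

lemma (in group) derived_eq_derived_set:
  assumes "subgroup (derived_set G (carrier G)) G"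
  shows "derived G (carrier G) = derived_set G (carrier G)"
  unfolding derived_def
proof
  show "generate G (derived_set G (carrier G)) \<subseteq> derived_set G (carrier G)"
    by (rule generate_subgroup_incl[OF subset_refl assms])
  show "derived_set G (carrier G) \<subseteq> generate G (derived_set G (carrier G))"
    by (rule subsetI, rule generate.incl)
qed

theorem theorem4:
  fixes k :: nat
  assumes "k \<ge> 1"
  shows "derived (G_grp k) (carrier (G_grp k)) =
    {f1 \<otimes>\<^bsub>G_grp k\<^esub> f2 \<otimes>\<^bsub>G_grp k\<^esub> inv\<^bsub>G_grp k\<^esub> f1 \<otimes>\<^bsub>G_grp k\<^esub> inv\<^bsub>G_grp k\<^esub> f2 | f1 f2.
       f1 \<in> carrier (G_grp k) \<and> f2 \<in> carrier (G_grp k)}"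
proof -
  obtain n where k: "k = Suc n" using assms by (cases k) auto
  have "derived (G_grp k) (carrier (G_grp k)) = derived_set (G_grp k) (carrier (G_grp k))"
    unfolding k by (rule group.derived_eq_derived_set[OF group_G_grp])
      (simp only: derived_set_G_grp subgroup_parity_kernel)
  then show ?thesis unfolding derived_set_eq_commutators .
qed

end
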